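(* Every simple vigorous subgroup $G\le\operatorname{Homeo}(\mathfrak{C})$ contains a non-trivial element of finite order.
   Context: $\mathfrak{C}$ denotes a Cantor space (a space homeomorphic to $\{0,1\}^\omega$). Groups of homeomorphisms act on the right. For $\gamma\in\operatorname{Homeo}(\mathfrak{C})$, $\operatorname{supp}(\gamma)=\{p\in\mathfrak{C}: p\gamma\neq p\}$. A subset $S\subseteq \operatorname{Homeo}(\mathfrak{C})$ is vigorous if for all clopen $A,B,C\subseteq\mathfrak{C}$ with $B,C$ non-empty proper subsets of $A$ there is $\gamma\in S$ with $\operatorname{supp}(\gamma)\subseteq A$ and $B\gamma\subseteq C$. *)

theory Defs
  imports "HOL-Analysis.Analysis"
begin

definition cantor_top :: "(nat \<Rightarrow> bool) topology" where
  "cantor_top = product_topology (\<lambda>_. discrete_topology (UNIV :: bool set)) UNIV"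

definition Homeo :: "((nat \<Rightarrow> bool) \<Rightarrow> (nat \<Rightarrow> bool)) set" where
  "Homeo = {f. homeomorphic_map cantor_top cantor_top f}"

definition supp :: "('a \<Rightarrow> 'a) \<Rightarrow> 'a set" where
  "supp f = {p. f p \<noteq> p}"

definition clopen_cantor :: "(nat \<Rightarrow> bool) set \<Rightarrow> bool" where
  "clopen_cantor A \<longleftrightarrow> openin cantor_top A \<and> closedin cantor_top A"

definition vigorous :: "((nat \<Rightarrow> bool) \<Rightarrow> (nat \<Rightarrow> bool)) set \<Rightarrow> bool" where
  "vigorous S \<longleftrightarrow>
     (\<forall>A B C. clopen_cantor A \<and> clopen_cantor B \<and> clopen_cantor C
        \<and> B \<noteq> {} \<and> C \<noteq> {} \<and> B \<subset> A \<and> C \<subset> A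
        \<longrightarrow> (\<exists>\<gamma>\<in>S. supp \<gamma> \<subseteq> A \<and> \<gamma> ` B \<subseteq> C))"

text \<open>Subgroups of Homeo(C). (Right action: the product gh is h \<circ> g; closure
  under composition does not depend on this convention.)\<close>
definition homeo_subgroup :: "((nat \<Rightarrow> bool) \<Rightarrow> (nat \<Rightarrow> bool)) set \<Rightarrow> bool" where
  "homeo_subgroup G \<longleftrightarrow> G \<subseteq> Homeo \<and> id \<in> G
     \<and> (\<forall>g\<in>G. \<forall>h\<in>G. h \<circ> g \<in> G) \<and> (\<forall>g\<in>G. inv g \<in> G)"

definition normal_in :: "('a \<Rightarrow> 'a) set \<Rightarrow> ('a \<Rightarrow> 'a) set \<Rightarrow> bool" where
  "normal_in N G \<longleftrightarrow> N \<subseteq> G \<and> id \<in> N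
     \<and> (\<forall>g\<in>N. \<forall>h\<in>N. h \<circ> g \<in> N) \<and> (\<forall>g\<in>N. inv g \<in> N)
     \<and> (\<forall>g\<in>G. \<forall>n\<in>N. g \<circ> n \<circ> inv g \<in> N)"

definition simple_homeo_group :: "((nat \<Rightarrow> bool) \<Rightarrow> (nat \<Rightarrow> bool)) set \<Rightarrow> bool" where
  "simple_homeo_group G \<longleftrightarrow> homeo_subgroup G \<and> G \<noteq> {id}
     \<and> (\<forall>N. normal_in N G \<longrightarrow> N = {id} \<or> N = G)"

end

theory Submission
  imports Defs
begin

text \<open>Choose a partition of the Cantor space into non-empty clopen sets K, D, F. Vigorousness gives
  f, g \<in> G supported in K \<union> D and K \<union> F with f K \<subseteq> D and g K \<subseteq> F. The commutator
  g f g^-1 f^-1 then permutes K \<rightarrow> g K \<rightarrow> f K \<rightarrow> K cyclically and fixes everything else, so it is a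
  non-trivial element of order 3.\<close>

lemma topspace_cantor_top [simp]: "topspace cantor_top = UNIV"
  by (simp add: cantor_top_def)

lemma clopen_cantor_coordinate: "clopen_cantor {x. x i = b}"
proof -
  have proj: "continuous_map cantor_top (discrete_topology UNIV) (\<lambda>x. x i)"
    unfolding cantor_top_def by (rule continuous_map_product_projection) simp
  have "openin cantor_top {x \<in> topspace cantor_top. x i \<in> {b}}"
    by (rule openin_continuous_map_preimage[OF proj]) simp
  moreover have "closedin cantor_top {x \<in> topspace cantor_top. x i \<in> {b}}"
    by (rule closedin_continuous_map_preimage[OF proj]) simp
  ultimately show ?thesis
    unfolding clopen_cantor_def by simp
qed

lemma clopen_cantor_Int: "clopen_cantor A \<Longrightarrow> clopen_cantor B \<Longrightarrow> clopen_cantor (A \<inter> B)"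
  unfolding clopen_cantor_def by auto

lemma clopen_cantor_Un: "clopen_cantor A \<Longrightarrow> clopen_cantor B \<Longrightarrow> clopen_cantor (A \<union> B)"
  unfolding clopen_cantor_def by auto

lemma Homeo_imp_bij: "f \<in> Homeo \<Longrightarrow> bij f"
  unfolding Homeo_def bij_def
  using homeomorphic_imp_surjective_map homeomorphic_imp_injective_map by fastforce

lemma supp_inv: "bij f \<Longrightarrow> supp (inv f) = supp f"
  unfolding supp_def by (metis bij_inv_eq_iff)

lemma bij_maps_superset_of_supp:
  assumes "bij f" "supp f \<subseteq> S" "p \<in> S"
  shows "f p \<in> S"
proof (cases "f p = p")
  case False
  then have "f (f p) \<noteq> f p"
    using assms(1) by (metis bij_is_inj injD)
  then show ?thesis
    using assms(2) unfolding supp_def by blast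
qed (use assms(3) in simp)

definition commutator :: "('a \<Rightarrow> 'a) \<Rightarrow> ('a \<Rightarrow> 'a) \<Rightarrow> 'a \<Rightarrow> 'a" where
  "commutator f g = g \<circ> f \<circ> inv g \<circ> inv f"

lemma homeo_subgroup_commutator:
  assumes "homeo_subgroup G" "f \<in> G" "g \<in> G"
  shows "commutator f g \<in> G"
proof -
  have comp: "\<And>a b. a \<in> G \<Longrightarrow> b \<in> G \<Longrightarrow> b \<circ> a \<in> G" and "inv f \<in> G" "inv g \<in> G"
    using assms unfolding homeo_subgroup_def by blast+
  then show ?thesis
    unfolding commutator_def using assms(2,3) by (metis comp_assoc)
qed

context
  fixes f g :: "'a \<Rightarrow> 'a" and K D F :: "'a set"
  assumes bij: "bij f" "bij g"
    and disjoint: "K \<inter> D = {}" "K \<inter> F = {}" "D \<inter> F = {}"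
    and supp: "supp f \<subseteq> K \<union> D" "supp g \<subseteq> K \<union> F"
    and displace: "f ` K \<subseteq> D" "g ` K \<subseteq> F"
begin

private lemma fixed_off_support:
  "p \<notin> K \<union> D \<Longrightarrow> f p = p" "p \<notin> K \<union> F \<Longrightarrow> g p = p"
  "p \<notin> K \<union> D \<Longrightarrow> inv f p = p" "p \<notin> K \<union> F \<Longrightarrow> inv g p = p"
  using supp supp_inv[OF bij(1)] supp_inv[OF bij(2)] unfolding supp_def by blast+

private lemma inv_maps_into_support:
  "p \<in> K \<union> D \<Longrightarrow> inv f p \<in> K \<union> D" "p \<in> K \<union> F \<Longrightarrow> inv g p \<in> K \<union> F"
  using bij_maps_superset_of_supp bij_imp_bij_inv bij supp supp_inv by metis+

private lemma inverse_simps [simp]: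
  "f (inv f p) = p" "inv f (f p) = p" "g (inv g p) = p" "inv g (g p) = p"
  using bij by (simp_all add: bij_is_inj bij_is_surj surj_f_inv_f)

lemma commutator_on_K: "k \<in> K \<Longrightarrow> commutator f g k = g k"
proof -
  assume k: "k \<in> K"
  have "inv f k \<notin> K"
    using k displace(1) disjoint(1) by (metis disjoint_iff image_subset_iff inverse_simps(1))
  then have "inv f k \<notin> K \<union> F"
    using inv_maps_into_support(1) k disjoint(3) by blast
  then have "inv g (inv f k) = inv f k"
    by (rule fixed_off_support(4))
  then show ?thesis
    by (simp add: commutator_def)
qed

lemma commutator_on_g_image: "k \<in> K \<Longrightarrow> commutator f g (g k) = f k"
proof -
  assume k: "k \<in> K"
  then have "g k \<notin> K \<union> D" "f k \<notin> K \<union> F"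
    using displace disjoint by blast+
  then have "inv f (g k) = g k" and "g (f k) = f k"
    using fixed_off_support(2,3) by blast+
  then show ?thesis
    by (simp add: commutator_def)
qed

lemma commutator_on_f_image: "k \<in> K \<Longrightarrow> commutator f g (f k) = k"
proof -
  assume k: "k \<in> K"
  have "inv g k \<notin> K"
    using k displace(2) disjoint(2) by (metis disjoint_iff image_subset_iff inverse_simps(3))
  then have "inv g k \<notin> K \<union> D"
    using inv_maps_into_support(2) k disjoint(3) by blast
  then have "f (inv g k) = inv g k"
    by (rule fixed_off_support(1))
  then show ?thesis
    by (simp add: commutator_def)
qed

lemma commutator_elsewhere:
  assumes "p \<notin> K" "p \<notin> g ` K" "p \<notin> f ` K"
  shows "commutator f g p = p"
proof -
  define q where "q = inv f p"
  have "q \<notin> K"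
    using assms(3) unfolding q_def by (metis image_eqI inverse_simps(1))
  show ?thesis
  proof (cases "q \<in> F")
    case True
    then have "f q = q"
      using disjoint(2,3) by (intro fixed_off_support(1)) blast
    then have "inv f p = p"
      unfolding q_def by (metis inverse_simps(1))
    then have "p \<in> F"
      using True unfolding q_def by simp
    moreover have "inv g p \<notin> K"
      using assms(2) by (metis image_eqI inverse_simps(3))
    ultimately have "inv g p \<notin> K \<union> D"
      using inv_maps_into_support(2) disjoint(3) by blast
    then have "f (inv g p) = inv g p"
      by (rule fixed_off_support(1))
    then show ?thesis
      using \<open>inv f p = p\<close> by (simp add: commutator_def)
  next
    case False
    then have "inv g q = q"
      using \<open>q \<notin> K\<close> by (intro fixed_off_support(4)) blast
    have "p \<notin> F"
    proof
      assume "p \<in> F"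
      then have "inv f p = p"
        using assms(1) disjoint(3) by (intro fixed_off_support(3)) blast
      with False \<open>p \<in> F\<close> show False
        unfolding q_def by simp
    qed
    then have "g p = p"
      using assms(1) by (intro fixed_off_support(2)) blast
    then show ?thesis
      using \<open>inv g q = q\<close> by (simp add: commutator_def q_def)
  qed
qed

lemma commutator_cube_id: "commutator f g ^^ 3 = id"
proof
  fix p
  have "commutator f g (commutator f g (commutator f g p)) = p"
  proof (cases "p \<in> K \<union> g ` K \<union> f ` K")
    case True
    then show ?thesis
      by (auto simp: commutator_on_K commutator_on_g_image commutator_on_f_image)
  qed (simp add: commutator_elsewhere)
  then show "(commutator f g ^^ 3) p = id p"
    by (simp add: numeral_3_eq_3)
qed

lemma commutator_moves_K: "k \<in> K \<Longrightarrow> commutator f g k \<noteq> k"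
  using commutator_on_K displace(2) disjoint(2) by fastforce

end

lemma vigorous_displacement:
  assumes "vigorous G" "clopen_cantor K" "clopen_cantor D" "K \<inter> D = {}" "K \<noteq> {}" "D \<noteq> {}"
  obtains f where "f \<in> G" "supp f \<subseteq> K \<union> D" "f ` K \<subseteq> D"
proof -
  have "K \<subset> K \<union> D" "D \<subset> K \<union> D"
    using assms(4-6) by blast+
  then show ?thesis
    using assms(1-3,5,6) clopen_cantor_Un that unfolding vigorous_def by meson
qed

theorem proposition4p5:
  fixes G :: "((nat \<Rightarrow> bool) \<Rightarrow> (nat \<Rightarrow> bool)) set"
  assumes "simple_homeo_group G" and "vigorous G"
  shows "\<exists>g\<in>G. g \<noteq> id \<and> (\<exists>n>0. g ^^ n = id)"
proof -
  have group: "homeo_subgroup G"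
    using assms(1) unfolding simple_homeo_group_def by blast
  define K where "K = {x :: nat \<Rightarrow> bool. x 0 = True} \<inter> {x. x 1 = True}"
  define D where "D = {x :: nat \<Rightarrow> bool. x 0 = True} \<inter> {x. x 1 = False}"
  define F where "F = {x :: nat \<Rightarrow> bool. x 0 = False}"
  have clopen: "clopen_cantor K" "clopen_cantor D" "clopen_cantor F"
    unfolding K_def D_def F_def by (intro clopen_cantor_Int clopen_cantor_coordinate)+
  have disjoint: "K \<inter> D = {}" "K \<inter> F = {}" "D \<inter> F = {}"
    and witnesses: "(\<lambda>_. True) \<in> K" "(\<lambda>n. n = 0) \<in> D" "(\<lambda>_. False) \<in> F"
    unfolding K_def D_def F_def by auto
  obtain f where f: "f \<in> G" "supp f \<subseteq> K \<union> D" "f ` K \<subseteq> D"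
    using vigorous_displacement[OF assms(2) clopen(1,2) disjoint(1)] witnesses by blast
  obtain g where g: "g \<in> G" "supp g \<subseteq> K \<union> F" "g ` K \<subseteq> F"
    using vigorous_displacement[OF assms(2) clopen(1,3) disjoint(2)] witnesses by blast
  have "bij f" "bij g"
    using f(1) g(1) group Homeo_imp_bij unfolding homeo_subgroup_def by blast+
  note cycle = commutator_cube_id[OF this disjoint f(2) g(2) f(3) g(3)]
    commutator_moves_K[OF this disjoint f(2) g(2) f(3) g(3) witnesses(1)]
  show ?thesis
    using homeo_subgroup_commutator[OF group f(1) g(1)] cycle
    by (intro bexI[of _ "commutator f g"] conjI exI[of _ 3]) auto
qed

end
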